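(* For integers $n\ge 1$ and $1\le k\le n$, define $T(n,k)=E(n,n-k)$. Then the numbers $T(n,k)$ satisfy $$T(n,k)=(n-k+1)\,T(n-1,k-1)+(n-1+k)\,T(n-1,k)\qquad (n\ge 2,\ 1\le k\le n),$$ with $T(n,1)=n!$ (and $T(m,j)=0$ for $j<1$ or $j>m$), and $T(n,k)$ equals the number of linear chord diagrams with $n$ chords having exactly $k$ LR pairs.
   Context: A linear chord diagram with $n$ chords is a partition of $[2n]=\{1,2,\dots,2n\}$ into $n$ blocks of size two, called chords. For a chord $\{a,b\}$ with $a<b$, $a$ is its startpoint and $b$ its endpoint. An LR pair in a linear chord diagram is a pair of consecutive integers $(i,i+1)$ such that $i$ is the startpoint of some chord and $i+1$ is the endpoint of some (possibly different) chord. The second-order Eulerian number $E(n,k)$ ($n\ge1$, $0\le k\le n-1$) is the number of permutations (words) $w_1w_2\cdots w_{2n}$ of the multiset $\{1,1,2,2,\dots,n,n\}$ such that for each $m$, all letters between the two copies of $m$ are less than $m$, and having exactly $k$ ascents, where an ascent is an index $1\le i<2n$ with $w_i<w_{i+1}$. These satisfy $E(n,0)=1$ and $E(n,k)=(k+1)E(n-1,k)+(2n-k-1)E(n-1,k-1)$. *)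

theory Defs
  imports Main "HOL-Library.Disjoint_Sets"
begin

definition stirling_perm :: "nat \<Rightarrow> nat list \<Rightarrow> bool" where
  "stirling_perm n w \<longleftrightarrow>
     length w = 2 * n \<and> set w \<subseteq> {1..n} \<and>
     (\<forall>m\<in>{1..n}. count_list w m = 2) \<and>
     (\<forall>i j l. i < l \<and> l < j \<and> j < length w \<and> w ! i = w ! j \<longrightarrow> w ! l < w ! i)"

definition ascents :: "nat list \<Rightarrow> nat" where
  "ascents w = card {i. Suc i < length w \<and> w ! i < w ! Suc i}"

definition eulerian2 :: "nat \<Rightarrow> nat \<Rightarrow> nat" where
  "eulerian2 n k = card {w. stirling_perm n w \<and> ascents w = k}"

definition T :: "nat \<Rightarrow> nat \<Rightarrow> nat" where
  "T n k = (if 1 \<le> k \<and> k \<le> n then eulerian2 n (n - k) else 0)"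

definition chord_diagram :: "nat \<Rightarrow> nat set set \<Rightarrow> bool" where
  "chord_diagram n C \<longleftrightarrow> partition_on {1..2*n} C \<and> (\<forall>c\<in>C. card c = 2)"

definition is_startpoint :: "nat set set \<Rightarrow> nat \<Rightarrow> bool" where
  "is_startpoint C i \<longleftrightarrow> (\<exists>c\<in>C. i \<in> c \<and> i = Min c)"

definition is_endpoint :: "nat set set \<Rightarrow> nat \<Rightarrow> bool" where
  "is_endpoint C i \<longleftrightarrow> (\<exists>c\<in>C. i \<in> c \<and> i = Max c)"

definition LR_pairs :: "nat set set \<Rightarrow> nat" where
  "LR_pairs C = card {i. is_startpoint C i \<and> is_endpoint C (i + 1)}"

end

theory Submission
  imports Defs
begin

text \<open>Both families grow by a canonical insertion. Shifting the letters of a Stirling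
  permutation of order n up by one and inserting the block 11 into one of its 2n + 1 slots
  produces every Stirling permutation of order n + 1 exactly once; the slots right after an
  ascent and the last slot keep the number of ascents, the others add one, whence
  E(n+1,k) = (k+1) E(n,k) + (2n+1-k) E(n,k-1). Likewise every chord diagram with n + 1 chords
  arises exactly once from one with n chords by adding a chord from a new point a to the new
  last point; the number of LR pairs is unchanged for the n + k choices of a at a startpoint or
  right after an LR pair, and increases by one for the remaining n + 2 - k choices. Hence the
  chord counts and k \<mapsto> E(n, n - k) obey the same recurrence with the same initial values,
  and the recurrence for T as well as T(n,1) = E(n,n-1) = n! follow.\<close>

section \<open>Inserting the block 11 into Stirling permutations\<close>
fun asc :: "nat list \<Rightarrow> nat" where
  "asc (x # y # ys) = (if x < y then 1 else 0) + asc (y # ys)"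
| "asc _ = 0"

lemma ascents_eq_asc: "ascents w = asc w"
proof (induction w rule: asc.induct)
  case (1 x y ys)
  have "{i. Suc i < length (x#y#ys) \<and> (x#y#ys) ! i < (x#y#ys) ! Suc i}
      = (if x < y then {0} else {}) \<union> Suc ` {i. Suc i < length (y#ys) \<and> (y#ys) ! i < (y#ys) ! Suc i}"
    by (rule set_eqI, case_tac xa) (auto simp: inj_image_mem_iff)
  hence "ascents (x#y#ys) = (if x < y then 1 else 0) + ascents (y#ys)"
    unfolding ascents_def by (simp add: card_image)
  with 1 show ?case by simp
qed (simp_all add: ascents_def)

lemma asc_append:
  "asc (xs @ ys) = asc xs + asc ys + (if xs \<noteq> [] \<and> ys \<noteq> [] \<and> last xs < hd ys then 1 else 0)"
proof (induction xs rule: asc.induct)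
  case ("2_2" v) thus ?case by (cases ys) auto
qed simp_all

lemma asc_map_Suc: "asc (map Suc v) = asc v"
  by (induction v rule: asc.induct) auto

definition insert_pair :: "nat \<Rightarrow> nat list \<Rightarrow> nat list" where
  "insert_pair p v = take p (map Suc v) @ 1 # 1 # drop p (map Suc v)"

definition skip_pair :: "nat \<Rightarrow> nat \<Rightarrow> nat" where
  "skip_pair p x = (if x < p then x else x + 2)"

lemma length_insert_pair [simp]: "length (insert_pair p v) = length v + 2"
  by (simp add: insert_pair_def)

lemma set_insert_pair: "set (insert_pair p v) = insert 1 (Suc ` set v)"
proof -
  have "set (take p (map Suc v)) \<union> set (drop p (map Suc v)) = set (map Suc v)"
    by (metis append_take_drop_id set_append)
  thus ?thesis by (auto simp: insert_pair_def)
qed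

lemma count_list_insert_pair:
  "count_list (insert_pair p v) m = count_list (map Suc v) m + (if m = 1 then 2 else 0)"
proof -
  have "count_list (take p (map Suc v)) m + count_list (drop p (map Suc v)) m = count_list (map Suc v) m"
    for m by (metis append_take_drop_id count_list_append)
  thus ?thesis by (simp add: insert_pair_def)
qed

lemma count_list_map_Suc: "count_list (map Suc v) (Suc j) = count_list v j"
  by (induction v) auto

lemma insert_pair_nth_pair:
  "p \<le> length v \<Longrightarrow> insert_pair p v ! p = 1 \<and> insert_pair p v ! Suc p = 1"
  by (simp add: insert_pair_def nth_append)

lemma insert_pair_nth_skip_pair:
  assumes "p \<le> length v" "x < length v"
  shows "insert_pair p v ! skip_pair p x = Suc (v ! x)"
proof (cases "x < p")
  case False
  hence "insert_pair p v ! skip_pair p x = drop p (map Suc v) ! (x - p)"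
    using assms(1) by (simp add: insert_pair_def skip_pair_def nth_append Suc_diff_le numeral_2_eq_2)
  thus ?thesis using False assms by simp
qed (use assms in \<open>simp add: insert_pair_def skip_pair_def nth_append\<close>)

lemma skip_pair_surj:
  assumes "p \<le> length v" "i < length v + 2" "i \<noteq> p" "i \<noteq> Suc p"
  obtains x where "x < length v" "i = skip_pair p x"
proof (cases "i < p")
  case True thus ?thesis using that[of i] assms by (simp add: skip_pair_def)
next
  case False
  hence "\<not> i - 2 < p" "i - 2 + 2 = i" using assms by auto
  thus ?thesis using that[of "i - 2"] assms by (simp add: skip_pair_def)
qed

lemma strict_mono_skip_pair: "strict_mono (skip_pair p)"
  by (auto simp: strict_mono_def skip_pair_def)

definition nested :: "nat list \<Rightarrow> bool" where
  "nested w \<longleftrightarrow> (\<forall>i j l. i < l \<and> l < j \<and> j < length w \<and> w ! i = w ! j \<longrightarrow> w ! l < w ! i)"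

lemma nestedD: "nested w \<Longrightarrow> i < l \<Longrightarrow> l < j \<Longrightarrow> j < length w \<Longrightarrow> w ! i = w ! j \<Longrightarrow> w ! l < w ! i"
  unfolding nested_def by blast

lemma stirling_perm_iff_nested:
  "stirling_perm n w \<longleftrightarrow>
     length w = 2 * n \<and> set w \<subseteq> {1..n} \<and> (\<forall>m\<in>{1..n}. count_list w m = 2) \<and> nested w"
  by (simp add: stirling_perm_def nested_def)

lemma nested_insert_pair:
  assumes p: "p \<le> length v" and pos: "0 \<notin> set v" and "nested v"
  shows "nested (insert_pair p v)"
  unfolding nested_def
proof (intro allI impI, elim conjE)
  fix i j l
  assume h: "i < l" "l < j" "j < length (insert_pair p v)" "insert_pair p v ! i = insert_pair p v ! j"
  let ?w = "insert_pair p v"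
  have pair: "?w ! p = 1" "?w ! Suc p = 1" using insert_pair_nth_pair[OF p] by auto
  note shifted = insert_pair_nth_skip_pair[OF p]
  have shifted_ge2: "x < length v \<Longrightarrow> 2 \<le> ?w ! skip_pair p x" for x
  proof -
    assume "x < length v"
    moreover hence "v ! x \<noteq> 0" using pos nth_mem by metis
    ultimately show ?thesis using shifted by simp
  qed
  have "\<not> (i = p \<or> i = Suc p)"
  proof
    assume i: "i = p \<or> i = Suc p"
    hence "j \<noteq> p" "j \<noteq> Suc p" "j < length v + 2" using h by auto
    then obtain j' where "j' < length v" "j = skip_pair p j'"
      using skip_pair_surj[OF p] by blast
    moreover have "?w ! j = 1" using h i pair by auto
    ultimately show False using shifted_ge2 by fastforce
  qed
  moreover have "i < length v + 2" using h by simp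
  ultimately obtain i' where i': "i' < length v" "i = skip_pair p i'"
    using skip_pair_surj[OF p] by blast
  have "j \<noteq> p" "j \<noteq> Suc p" using h shifted_ge2[OF i'(1)] pair i'(2) by auto
  moreover have "j < length v + 2" using h by simp
  ultimately obtain j' where j': "j' < length v" "j = skip_pair p j'"
    using skip_pair_surj[OF p] by blast
  show "?w ! l < ?w ! i"
  proof (cases "l = p \<or> l = Suc p")
    case True thus "?w ! l < ?w ! i" using shifted_ge2[OF i'(1)] pair i'(2) by auto
  next
    case False
    moreover have "l < length v + 2" using h by simp
    ultimately obtain l' where l': "l' < length v" "l = skip_pair p l'"
      using skip_pair_surj[OF p] by blast
    have "i' < l'" "l' < j'" using h i' j' l' strict_mono_skip_pair strict_mono_less by metis+
    hence "v ! l' < v ! i'" using nestedD[OF \<open>nested v\<close>] j' h(4) shifted i' by auto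
    thus "?w ! l < ?w ! i" using shifted i' l' by simp
  qed
qed

lemma stirling_perm_insert_pair:
  assumes st: "stirling_perm n v" and p: "p \<le> length v"
  shows "stirling_perm (Suc n) (insert_pair p v)"
proof -
  have len: "length v = 2 * n" and set: "set v \<subseteq> {1..n}" and cnt: "\<forall>m\<in>{1..n}. count_list v m = 2"
    and nested: "nested v"
    using st unfolding stirling_perm_iff_nested by auto
  have pos: "0 \<notin> set v" using set by auto
  have "count_list (insert_pair p v) m = 2" if m: "m \<in> {1..Suc n}" for m
  proof (cases "m = 1")
    case True
    have "count_list (map Suc v) 1 = 0"
      using count_list_map_Suc[of v 0] pos by (simp add: count_list_0_iff)
    thus ?thesis using True count_list_insert_pair by simp
  next
    case False
    then obtain j where "m = Suc j" "j \<in> {1..n}" using m by (cases m) auto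
    thus ?thesis using count_list_insert_pair count_list_map_Suc cnt False by simp
  qed
  moreover have "set (insert_pair p v) \<subseteq> {1..Suc n}"
    using set unfolding set_insert_pair by auto
  ultimately show ?thesis
    using len nested_insert_pair[OF p pos nested] unfolding stirling_perm_iff_nested by simp
qed

lemma nested_insert_pairD:
  assumes p: "p \<le> length v" and "nested (insert_pair p v)"
  shows "nested v"
  unfolding nested_def
proof (intro allI impI, elim conjE)
  fix i j l assume h: "i < l" "l < j" "j < length v" "v ! i = v ! j"
  let ?w = "insert_pair p v" and ?s = "skip_pair p"
  have w_skip: "x < length v \<Longrightarrow> ?w ! ?s x = Suc (v ! x)" for x
    using insert_pair_nth_skip_pair[OF p] by simp
  have "?s i < ?s l" "?s l < ?s j"
    using h strict_mono_skip_pair strict_mono_less by blast+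
  moreover have "?s j < length ?w" using h by (simp add: skip_pair_def)
  moreover have "?w ! ?s i = ?w ! ?s j" using w_skip h by simp
  ultimately have "?w ! ?s l < ?w ! ?s i" by (rule nestedD[OF \<open>nested ?w\<close>])
  thus "v ! l < v ! i" using w_skip h by simp
qed

text \<open>Nothing is smaller than 1, so nothing can sit between its two copies.\<close>

lemma stirling_perm_Suc_obtain_ones:
  assumes st: "stirling_perm (Suc n) w"
  obtains A B where "w = A @ 1 # 1 # B" "1 \<notin> set A" "1 \<notin> set B"
proof -
  have set: "set w \<subseteq> {1..Suc n}" and c1: "count_list w 1 = 2" and nested: "nested w"
    using st unfolding stirling_perm_iff_nested by auto
  hence "1 \<in> set w" by (metis count_notin zero_neq_numeral)
  then obtain A R where w1: "w = A @ 1 # R" and A1: "1 \<notin> set A" by (meson split_list_first)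
  have cR: "count_list R 1 = 1" using c1 w1 A1 by simp
  then obtain r B where R: "R = r # B" by (cases R) auto
  have r1: "r = 1"
  proof (rule ccontr)
    assume "r \<noteq> 1"
    hence "count_list B 1 = 1" using cR R by simp
    hence "1 \<in> set B" by (metis count_notin zero_neq_one)
    then obtain k where k: "k < length B" "B ! k = 1" by (meson in_set_conv_nth)
    have "w ! length A = 1" "w ! Suc (length A) = r" "w ! Suc (Suc (length A + k)) = 1"
      "Suc (Suc (length A + k)) < length w"
      using w1 R k by (auto simp: nth_append)
    hence "r < 1" using nestedD[OF nested, of "length A" "Suc (length A)" "Suc (Suc (length A + k))"] by auto
    moreover have "r \<in> set w" using w1 R by auto
    ultimately show False using set by auto
  qed
  have "1 \<notin> set B" using cR R r1 by (simp add: count_list_0_iff[symmetric])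
  thus ?thesis using that w1 R r1 A1 by blast
qed

lemma stirling_perm_Suc_obtain_insert_pair:
  assumes st: "stirling_perm (Suc n) w"
  obtains p v where "stirling_perm n v" "p \<le> length v" "w = insert_pair p v"
proof -
  obtain A B where w: "w = A @ 1 # 1 # B" and A1: "1 \<notin> set A" and B1: "1 \<notin> set B"
    using stirling_perm_Suc_obtain_ones[OF st] by blast
  have len: "length w = 2 * Suc n" and set: "set w \<subseteq> {1..Suc n}"
    and cnt: "\<forall>m\<in>{1..Suc n}. count_list w m = 2" and nested: "nested w"
    using st unfolding stirling_perm_iff_nested by auto
  have ge2: "2 \<le> x" if "x \<in> set (A @ B)" for x
  proof -
    have "x \<in> set w" "x \<noteq> 1" using that w A1 B1 by auto
    thus ?thesis using set by force
  qed
  define v where "v = map (\<lambda>x. x - 1) (A @ B)"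
  have mv: "map Suc v = A @ B" unfolding v_def map_map
    by (rule map_idI) (use ge2 in fastforce)
  have p: "length A \<le> length v" using mv by (metis length_append length_map le_add1)
  have w_ins: "w = insert_pair (length A) v" unfolding insert_pair_def mv using w by simp
  have "length v = 2 * n" using len w unfolding v_def by simp
  moreover have "set v \<subseteq> {1..n}" unfolding v_def using ge2 set w by fastforce
  moreover have "count_list v m = 2" if m: "m \<in> {1..n}" for m
  proof -
    have "count_list v m = count_list (map Suc v) (Suc m)" by (simp add: count_list_map_Suc)
    also have "\<dots> = count_list w (Suc m)" using mv w m by simp
    also have "\<dots> = 2" using cnt m by auto
    finally show ?thesis .
  qed
  moreover have "nested v" using nested_insert_pairD[OF p] nested w_ins by simp
  ultimately have "stirling_perm n v" unfolding stirling_perm_iff_nested by blast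
  thus ?thesis using that p w_ins by blast
qed

lemma append_Cons_eq_append_Cons_iff:
  "x \<notin> set xs \<Longrightarrow> x \<notin> set xs' \<Longrightarrow> xs @ x # ys = xs' @ x # ys' \<longleftrightarrow> xs = xs' \<and> ys = ys'"
proof (induction xs arbitrary: xs')
  case Nil thus ?case by (cases xs') auto
next
  case (Cons a xs) thus ?case by (cases xs') auto
qed

lemma insert_pair_inj:
  assumes "0 \<notin> set v" "0 \<notin> set v'" "p \<le> length v" "p' \<le> length v'"
    and "insert_pair p v = insert_pair p' v'"
  shows "p = p' \<and> v = v'"
proof -
  have "1 \<notin> set (take p (map Suc v))" "1 \<notin> set (take p' (map Suc v'))"
    using assms(1,2) by (auto dest: in_set_takeD)
  hence "take p (map Suc v) = take p' (map Suc v') \<and> drop p (map Suc v) = drop p' (map Suc v')"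
    using assms(5) unfolding insert_pair_def by (simp add: append_Cons_eq_append_Cons_iff)
  moreover hence "p = p'" using assms(3,4) by (metis length_map length_take min.absorb2)
  ultimately show ?thesis by (metis append_take_drop_id inj_map_eq_map inj_Suc)
qed

lemma asc_insert_pair:
  assumes "0 \<notin> set v" "p \<le> length v"
  shows "asc (insert_pair p v)
    = asc v + (if p = length v \<or> (0 < p \<and> p < length v \<and> v ! (p - 1) < v ! p) then 0 else 1)"
proof -
  let ?u = "map Suc v"
  let ?A = "take p ?u" and ?B = "drop p ?u"
  have uge: "x \<in> set ?u \<Longrightarrow> 2 \<le> x" for x using assms(1) by (cases x) (auto simp: Suc_le_eq intro: gr0I)
  have "asc (?A @ 1 # 1 # ?B) = asc ?A + asc (1 # 1 # ?B)"
  proof (cases "?A = []")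
    case False
    hence "last ?A \<in> set ?u" by (meson in_set_takeD last_in_set)
    thus ?thesis using asc_append[of ?A "1#1#?B"] uge by fastforce
  qed auto
  moreover have "asc (1 # 1 # ?B) = asc ?B + (if ?B \<noteq> [] then 1 else 0)"
  proof (cases ?B)
    case (Cons b B')
    hence "b \<in> set ?u" by (metis in_set_dropD list.set_intros(1))
    thus ?thesis using Cons uge by fastforce
  qed simp
  moreover have "asc ?u = asc ?A + asc ?B + (if ?A \<noteq> [] \<and> ?B \<noteq> [] \<and> last ?A < hd ?B then 1 else 0)"
    using asc_append[of ?A ?B] by simp
  moreover have "?A \<noteq> [] \<and> ?B \<noteq> [] \<and> last ?A < hd ?B \<longleftrightarrow> 0 < p \<and> p < length v \<and> v ! (p - 1) < v ! p"
  proof (cases "0 < p \<and> p < length v")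
    case True
    hence "last ?A = Suc (v ! (p - 1))" "hd ?B = Suc (v ! p)"
      by (subst last_conv_nth, auto simp: hd_drop_conv_nth min_def)+
    thus ?thesis using True by auto
  qed auto
  ultimately show ?thesis using assms(2) asc_map_Suc[of v] unfolding insert_pair_def by auto
qed

section \<open>Counting by insertion\<close>

lemma card_level_set_by_insertion:
  fixes g :: "'a \<times> 'b \<Rightarrow> 'c" and st :: "'c \<Rightarrow> nat" and st0 :: "'a \<Rightarrow> nat"
  assumes fin: "finite X" "finite Q" and bij: "bij_betw g (X \<times> Q) Y"
    and st_g: "\<And>x q. x \<in> X \<Longrightarrow> q \<in> Q \<Longrightarrow> st (g (x, q)) = st0 x + (if Z x q then 0 else 1)"
    and card_Z: "\<And>x. x \<in> X \<Longrightarrow> card {q\<in>Q. Z x q} = f (st0 x)"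
  shows "card {y\<in>Y. st y = k} = f k * card {x\<in>X. st0 x = k}
           + (if k = 0 then 0 else (card Q - f (k - 1)) * card {x\<in>X. st0 x = k - 1})"
proof -
  have level: "card {q\<in>Q. st0 x + (if Z x q then 0 else 1) = k}
      = (if st0 x = k then f k else 0) + (if k \<noteq> 0 \<and> st0 x = k - 1 then card Q - f (k - 1) else 0)"
    if x: "x \<in> X" for x
  proof -
    consider "st0 x = k" | "k \<noteq> 0 \<and> st0 x = k - 1" | "st0 x \<noteq> k \<and> \<not> (k \<noteq> 0 \<and> st0 x = k - 1)"
      by blast
    thus ?thesis
    proof cases
      case 1
      hence "{q\<in>Q. st0 x + (if Z x q then 0 else 1) = k} = {q\<in>Q. Z x q}" by auto
      thus ?thesis using 1 card_Z[OF x] by auto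
    next
      case 2
      hence "{q\<in>Q. st0 x + (if Z x q then 0 else 1) = k} = Q - {q\<in>Q. Z x q}" by auto
      moreover have "card (Q - {q\<in>Q. Z x q}) = card Q - card {q\<in>Q. Z x q}"
        using fin by (intro card_Diff_subset) auto
      ultimately show ?thesis using 2 card_Z[OF x] by auto
    next
      case 3
      hence empty: "{q\<in>Q. st0 x + (if Z x q then 0 else 1) = k} = {}" by auto
      show ?thesis unfolding empty using 3 by auto
    qed
  qed
  have "{y\<in>Y. st y = k} = g ` {z \<in> X \<times> Q. st (g z) = k}"
    using bij by (auto simp: bij_betw_def)
  hence "card {y\<in>Y. st y = k} = card {z \<in> X \<times> Q. st (g z) = k}"
    using bij by (simp add: bij_betw_def card_image inj_on_subset[of g "X \<times> Q"])
  also have "{z \<in> X \<times> Q. st (g z) = k} = Sigma X (\<lambda>x. {q\<in>Q. st0 x + (if Z x q then 0 else 1) = k})"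
    using st_g by auto
  also have "card \<dots> = (\<Sum>x\<in>X. card {q\<in>Q. st0 x + (if Z x q then 0 else 1) = k})"
    using fin by simp
  also have "\<dots> = (\<Sum>x\<in>X. (if st0 x = k then f k else 0)
                       + (if k \<noteq> 0 \<and> st0 x = k - 1 then card Q - f (k - 1) else 0))"
    using level by simp
  finally show ?thesis using fin(1)
    by (simp add: sum.distrib sum.If_cases Int_def)
qed

lemma finite_stirling_perm: "finite {v. stirling_perm n v}"
  by (rule finite_subset[OF _ finite_lists_length_eq[OF finite_atLeastAtMost, of 1 n "2 * n"]])
     (auto simp: stirling_perm_def)

lemma card_ascent_slots:
  "card {p \<in> {..length v}. p = length v \<or> (0 < p \<and> p < length v \<and> v ! (p - 1) < v ! p)}
     = ascents v + 1"
proof -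
  have "{p \<in> {..length v}. p = length v \<or> (0 < p \<and> p < length v \<and> v ! (p - 1) < v ! p)}
      = insert (length v) (Suc ` {i. Suc i < length v \<and> v ! i < v ! Suc i})"
    by (auto simp: image_iff) (metis Suc_pred)
  moreover have "length v \<notin> Suc ` {i. Suc i < length v \<and> v ! i < v ! Suc i}" by auto
  moreover have "finite {i. Suc i < length v \<and> v ! i < v ! Suc i}"
    by (rule finite_subset[of _ "{..<length v}"]) auto
  ultimately show ?thesis by (simp add: card_image ascents_def)
qed

theorem eulerian2_Suc:
  "eulerian2 (Suc n) k = (k + 1) * eulerian2 n k + (if k = 0 then 0 else (2 * n + 1 - k) * eulerian2 n (k - 1))"
proof -
  let ?X = "{v. stirling_perm n v}" and ?Q = "{..2 * n}"
  let ?Z = "\<lambda>v p. p = length v \<or> (0 < p \<and> p < length v \<and> v ! (p - 1) < v ! p)"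
  let ?g = "\<lambda>(v, p). insert_pair p v"
  have pos: "stirling_perm n v \<Longrightarrow> 0 \<notin> set v" for v by (auto simp: stirling_perm_def)
  have len: "stirling_perm n v \<Longrightarrow> length v = 2 * n" for v by (auto simp: stirling_perm_def)
  have "inj_on ?g (?X \<times> ?Q)"
  proof (rule inj_onI, clarify)
    fix v p v' p' assume "stirling_perm n v" "stirling_perm n v'" "p \<le> 2 * n" "p' \<le> 2 * n"
      and "insert_pair p v = insert_pair p' v'"
    thus "v = v' \<and> p = p'" using insert_pair_inj pos len by metis
  qed
  moreover have "?g ` (?X \<times> ?Q) = {w. stirling_perm (Suc n) w}"
  proof
    show "?g ` (?X \<times> ?Q) \<subseteq> {w. stirling_perm (Suc n) w}"
      using stirling_perm_insert_pair len by auto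
    show "{w. stirling_perm (Suc n) w} \<subseteq> ?g ` (?X \<times> ?Q)"
      using len by (force elim: stirling_perm_Suc_obtain_insert_pair)
  qed
  moreover have "ascents (?g (v, p)) = ascents v + (if ?Z v p then 0 else 1)"
    if "v \<in> ?X" "p \<in> ?Q" for v p
    using asc_insert_pair[of v p] pos len that by (simp add: ascents_eq_asc)
  moreover have "card {p \<in> ?Q. ?Z v p} = ascents v + 1" if "v \<in> ?X" for v
    using card_ascent_slots[of v] len that by simp
  ultimately have "card {w \<in> {w. stirling_perm (Suc n) w}. ascents w = k}
      = (k + 1) * card {v \<in> ?X. ascents v = k}
        + (if k = 0 then 0 else (card ?Q - (k - 1 + 1)) * card {v \<in> ?X. ascents v = k - 1})"
    by (intro card_level_set_by_insertion[where Z = ?Z and f = "\<lambda>j. j + 1"])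
       (auto simp: bij_betw_def finite_stirling_perm)
  thus ?thesis unfolding eulerian2_def by auto
qed

section \<open>LR pairs of chord diagrams\<close>

lemma chord_diagram_chordE:
  assumes "chord_diagram n C" "c \<in> C"
  obtains x y where "x < y" "c = {x, y}" "x \<in> {1..2*n}" "y \<in> {1..2*n}"
proof -
  have "card c = 2" "c \<subseteq> {1..2*n}"
    using assms unfolding chord_diagram_def partition_on_def by auto
  then obtain x y where xy: "c = {x, y}" "x \<noteq> y" by (meson card_2_iff)
  show ?thesis
  proof (cases "x < y")
    case True thus ?thesis using that xy \<open>c \<subseteq> {1..2*n}\<close> by auto
  next
    case False thus ?thesis using that[of y x] xy \<open>c \<subseteq> {1..2*n}\<close> by auto
  qed
qed

lemma chord_diagram_chord_unique:
  "chord_diagram n C \<Longrightarrow> c \<in> C \<Longrightarrow> c' \<in> C \<Longrightarrow> x \<in> c \<Longrightarrow> x \<in> c' \<Longrightarrow> c = c'"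
  unfolding chord_diagram_def partition_on_def disjoint_def by blast

lemma chord_diagram_cover:
  "chord_diagram n C \<Longrightarrow> x \<in> {1..2*n} \<Longrightarrow> \<exists>c\<in>C. x \<in> c"
  unfolding chord_diagram_def partition_on_def by blast

lemma chord_diagram_chord_finite:
  "chord_diagram n C \<Longrightarrow> c \<in> C \<Longrightarrow> finite c \<and> c \<noteq> {}"
  by (erule (1) chord_diagram_chordE) auto

lemma finite_chord_diagram: "finite {C. chord_diagram n C}"
  by (rule finite_subset[OF _ finitely_many_partition_on[of "{1..2*n}"]])
     (auto simp: chord_diagram_def)

lemma is_startpoint_iff:
  assumes "chord_diagram n C"
  shows "is_startpoint C i \<longleftrightarrow> (\<exists>j. i < j \<and> {i, j} \<in> C)"
proof
  assume "is_startpoint C i"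
  then obtain c where c: "c \<in> C" "i \<in> c" "i = Min c" by (auto simp: is_startpoint_def)
  obtain x y where "x < y" "c = {x, y}" using chord_diagram_chordE[OF assms c(1)] by blast
  thus "\<exists>j. i < j \<and> {i, j} \<in> C" using c by auto
next
  assume "\<exists>j. i < j \<and> {i, j} \<in> C"
  then obtain j where "i < j" "{i, j} \<in> C" by blast
  thus "is_startpoint C i" unfolding is_startpoint_def by (intro bexI[of _ "{i, j}"]) auto
qed

lemma is_endpoint_iff:
  assumes "chord_diagram n C"
  shows "is_endpoint C i \<longleftrightarrow> (\<exists>j. j < i \<and> {j, i} \<in> C)"
proof
  assume "is_endpoint C i"
  then obtain c where c: "c \<in> C" "i \<in> c" "i = Max c" by (auto simp: is_endpoint_def)
  obtain x y where "x < y" "c = {x, y}" using chord_diagram_chordE[OF assms c(1)] by blast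
  thus "\<exists>j. j < i \<and> {j, i} \<in> C" using c by auto
next
  assume "\<exists>j. j < i \<and> {j, i} \<in> C"
  then obtain j where "j < i" "{j, i} \<in> C" by blast
  thus "is_endpoint C i" unfolding is_endpoint_def by (intro bexI[of _ "{j, i}"]) auto
qed

lemma startpoint_range:
  assumes "chord_diagram n C" "is_startpoint C x"
  shows "1 \<le> x \<and> x < 2*n"
proof -
  obtain j where "x < j" "{x, j} \<in> C" using assms is_startpoint_iff by blast
  moreover obtain a b where "a < b" "{x, j} = {a, b}" "a \<in> {1..2*n}" "b \<in> {1..2*n}"
    using chord_diagram_chordE[OF assms(1) calculation(2)] by blast
  ultimately show ?thesis by (auto simp: doubleton_eq_iff)
qed

lemma endpoint_range:
  assumes "chord_diagram n C" "is_endpoint C x"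
  shows "1 < x \<and> x \<le> 2*n"
proof -
  obtain j where "j < x" "{j, x} \<in> C" using assms is_endpoint_iff by blast
  moreover obtain a b where "a < b" "{j, x} = {a, b}" "a \<in> {1..2*n}" "b \<in> {1..2*n}"
    using chord_diagram_chordE[OF assms(1) calculation(2)] by blast
  ultimately show ?thesis by (auto simp: doubleton_eq_iff)
qed

lemma startpoint_or_endpoint:
  assumes "chord_diagram n C" "x \<in> {1..2*n}"
  shows "is_startpoint C x \<or> is_endpoint C x"
proof -
  obtain c where c: "c \<in> C" "x \<in> c" using assms chord_diagram_cover by blast
  then obtain a b where "a < b" "c = {a, b}" using chord_diagram_chordE[OF assms(1)] by blast
  thus ?thesis using c assms(1) by (auto simp: is_startpoint_iff is_endpoint_iff)
qed

lemma not_startpoint_and_endpoint: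
  assumes "chord_diagram n C" "is_startpoint C x" "is_endpoint C x"
  shows False
proof -
  obtain j where j: "x < j" "{x, j} \<in> C" using assms is_startpoint_iff by blast
  obtain i where i: "i < x" "{i, x} \<in> C" using assms is_endpoint_iff by blast
  have "{x, j} = {i, x}" using chord_diagram_chord_unique[OF assms(1) j(2) i(2), of x] by simp
  thus False using i j by (auto simp: doubleton_eq_iff)
qed

lemma card_startpoints:
  assumes cd: "chord_diagram n C"
  shows "card {x. is_startpoint C x} = n"
proof -
  have "card (\<Union>C) = sum card C"
    using cd chord_diagram_chord_finite[OF cd]
    by (intro card_Union_disjoint) (auto simp: chord_diagram_def partition_on_def)
  hence "card C = n" using cd by (simp add: chord_diagram_def partition_on_def)
  moreover have "{x. is_startpoint C x} = Min ` C"
    using chord_diagram_chord_finite[OF cd] by (auto simp: is_startpoint_def) (metis Min_in)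
  moreover have "inj_on Min C"
    using chord_diagram_chord_finite[OF cd] chord_diagram_chord_unique[OF cd]
    by (metis Min_in inj_onI)
  ultimately show ?thesis by (simp add: card_image)
qed

definition skip_at :: "nat \<Rightarrow> nat \<Rightarrow> nat" where
  "skip_at a x = (if x < a then x else Suc x)"

definition unskip_at :: "nat \<Rightarrow> nat \<Rightarrow> nat" where
  "unskip_at a x = (if x < a then x else x - 1)"

definition insert_chord :: "nat \<Rightarrow> nat \<Rightarrow> nat set set \<Rightarrow> nat set set" where
  "insert_chord n a D = insert {a, 2*n+2} ((`) (skip_at a) ` D)"

lemma inj_skip_at: "inj (skip_at a)"
  by (auto simp: inj_def skip_at_def)

lemma strict_mono_skip_at: "strict_mono (skip_at a)"
  by (auto simp: strict_mono_def skip_at_def)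

lemma skip_at_neq: "skip_at a x \<noteq> a"
  by (auto simp: skip_at_def)

lemma Suc_skip_at_eq_iff: "Suc (skip_at a x) = skip_at a y \<longleftrightarrow> y = Suc x \<and> Suc x \<noteq> a"
  by (auto simp: skip_at_def)

lemma Suc_eq_skip_at_iff: "Suc a = skip_at a x \<longleftrightarrow> x = a"
  by (auto simp: skip_at_def)

lemma skip_at_le: "skip_at a x \<le> Suc x"
  by (auto simp: skip_at_def)

lemma unskip_skip_at: "unskip_at a (skip_at a x) = x"
  by (auto simp: skip_at_def unskip_at_def)

lemma skip_unskip_at: "x \<noteq> a \<Longrightarrow> skip_at a (unskip_at a x) = x"
  by (auto simp: skip_at_def unskip_at_def)

lemma inj_on_unskip_at: "inj_on (unskip_at a) (- {a})"
  by (rule inj_onI) (metis ComplD insertCI skip_unskip_at)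

lemma skip_at_image:
  assumes "1 \<le> a" "a \<le> 2*n+1"
  shows "skip_at a ` {1..2*n} = {1..2*n+2} - {a, 2*n+2}"
proof (intro set_eqI iffI)
  fix x assume "x \<in> {1..2*n+2} - {a, 2*n+2}"
  thus "x \<in> skip_at a ` {1..2*n}"
  proof (cases "x < a")
    case True thus ?thesis using assms \<open>x \<in> _\<close> by (intro image_eqI[of _ _ x]) (auto simp: skip_at_def)
  next
    case False thus ?thesis using assms \<open>x \<in> _\<close> by (intro image_eqI[of _ _ "x - 1"]) (auto simp: skip_at_def)
  qed
qed (use assms in \<open>auto simp: skip_at_def\<close>)

lemma unskip_at_image:
  assumes "1 \<le> a" "a \<le> 2*n+1"
  shows "unskip_at a ` ({1..2*n+2} - {a, 2*n+2}) = {1..2*n}"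
proof -
  have "unskip_at a ` skip_at a ` {1..2*n} = {1..2*n}" by (simp add: image_image unskip_skip_at)
  thus ?thesis using skip_at_image[OF assms] by simp
qed

lemma is_startpoint_image:
  assumes "strict_mono f" "\<forall>c\<in>D. finite c \<and> c \<noteq> {}"
  shows "is_startpoint ((`) f ` D) i \<longleftrightarrow> (\<exists>x. i = f x \<and> is_startpoint D x)"
proof -
  have m: "c \<in> D \<Longrightarrow> Min (f ` c) = f (Min c)" for c
    using mono_Min_commute[of f c] assms strict_mono_mono by fastforce
  show ?thesis unfolding is_startpoint_def
  proof
    assume "\<exists>c'\<in>(`) f ` D. i \<in> c' \<and> i = Min c'"
    then obtain c where "c \<in> D" "i = f (Min c)" using m by auto
    thus "\<exists>x. i = f x \<and> (\<exists>c\<in>D. x \<in> c \<and> x = Min c)" using assms(2) Min_in by blast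
  next
    assume "\<exists>x. i = f x \<and> (\<exists>c\<in>D. x \<in> c \<and> x = Min c)"
    then obtain x c where "i = f x" "c \<in> D" "x \<in> c" "x = Min c" by blast
    thus "\<exists>c'\<in>(`) f ` D. i \<in> c' \<and> i = Min c'" using m by (intro bexI[of _ "f ` c"]) auto
  qed
qed

lemma is_endpoint_image:
  assumes "strict_mono f" "\<forall>c\<in>D. finite c \<and> c \<noteq> {}"
  shows "is_endpoint ((`) f ` D) i \<longleftrightarrow> (\<exists>x. i = f x \<and> is_endpoint D x)"
proof -
  have m: "c \<in> D \<Longrightarrow> Max (f ` c) = f (Max c)" for c
    using mono_Max_commute[of f c] assms strict_mono_mono by fastforce
  show ?thesis unfolding is_endpoint_def
  proof
    assume "\<exists>c'\<in>(`) f ` D. i \<in> c' \<and> i = Max c'"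
    then obtain c where "c \<in> D" "i = f (Max c)" using m by auto
    thus "\<exists>x. i = f x \<and> (\<exists>c\<in>D. x \<in> c \<and> x = Max c)" using assms(2) Max_in by blast
  next
    assume "\<exists>x. i = f x \<and> (\<exists>c\<in>D. x \<in> c \<and> x = Max c)"
    then obtain x c where "i = f x" "c \<in> D" "x \<in> c" "x = Max c" by blast
    thus "\<exists>c'\<in>(`) f ` D. i \<in> c' \<and> i = Max c'" using m by (intro bexI[of _ "f ` c"]) auto
  qed
qed

lemma is_startpoint_insert: "is_startpoint (insert c D) i \<longleftrightarrow> (i \<in> c \<and> i = Min c) \<or> is_startpoint D i"
  by (auto simp: is_startpoint_def)

lemma is_endpoint_insert: "is_endpoint (insert c D) i \<longleftrightarrow> (i \<in> c \<and> i = Max c) \<or> is_endpoint D i"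
  by (auto simp: is_endpoint_def)

lemma is_startpoint_insert_chord:
  assumes "chord_diagram n D" "a \<le> 2*n+1"
  shows "is_startpoint (insert_chord n a D) i \<longleftrightarrow> i = a \<or> (\<exists>x. i = skip_at a x \<and> is_startpoint D x)"
  unfolding insert_chord_def is_startpoint_insert using assms(2)
  by (auto simp: is_startpoint_image[OF strict_mono_skip_at] chord_diagram_chord_finite[OF assms(1)])

lemma is_endpoint_insert_chord:
  assumes "chord_diagram n D" "a \<le> 2*n+1"
  shows "is_endpoint (insert_chord n a D) i \<longleftrightarrow> i = 2*n+2 \<or> (\<exists>x. i = skip_at a x \<and> is_endpoint D x)"
  unfolding insert_chord_def is_endpoint_insert using assms(2)
  by (auto simp: is_endpoint_image[OF strict_mono_skip_at] chord_diagram_chord_finite[OF assms(1)])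

definition LR_starts :: "nat set set \<Rightarrow> nat set" where
  "LR_starts C = {i. is_startpoint C i \<and> is_endpoint C (i + 1)}"

lemma LR_pairs_eq_card_LR_starts: "LR_pairs C = card (LR_starts C)"
  by (simp add: LR_pairs_def LR_starts_def)

lemma finite_LR_starts: "chord_diagram n C \<Longrightarrow> finite (LR_starts C)"
  by (rule finite_subset[of _ "{..2*n}"]) (auto simp: LR_starts_def dest: startpoint_range)

text \<open>Starting the new chord at a destroys the LR pair (a - 1, a) of D, if there is one, and
  creates the LR pair (a, a + 1) exactly when the old point a is an endpoint or a + 1 is the new
  last point.\<close>

lemma LR_starts_insert_chord:
  assumes cd: "chord_diagram n D" and a: "1 \<le> a" "a \<le> 2*n+1"
  shows "LR_starts (insert_chord n a D)
     = skip_at a ` {x \<in> LR_starts D. Suc x \<noteq> a} \<union> (if a = 2*n+1 \<or> is_endpoint D a then {a} else {})"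
    (is "?L = ?R")
proof (intro set_eqI iffI)
  fix i assume "i \<in> ?L"
  hence s: "i = a \<or> (\<exists>x. i = skip_at a x \<and> is_startpoint D x)"
    and e: "Suc i = 2*n+2 \<or> (\<exists>y. Suc i = skip_at a y \<and> is_endpoint D y)"
    by (auto simp: LR_starts_def is_startpoint_insert_chord[OF cd a(2)] is_endpoint_insert_chord[OF cd a(2)])
  show "i \<in> ?R"
  proof (cases "i = a")
    case True
    hence "a = 2*n+1 \<or> is_endpoint D a" using e by (auto simp: Suc_eq_skip_at_iff)
    thus ?thesis using True by auto
  next
    case False
    then obtain x where x: "i = skip_at a x" "is_startpoint D x" using s by blast
    have "Suc i \<noteq> 2*n+2" using startpoint_range[OF cd x(2)] skip_at_le[of a x] x(1) by simp
    then obtain y where "Suc (skip_at a x) = skip_at a y" "is_endpoint D y" using e x by auto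
    hence "is_endpoint D (Suc x)" "Suc x \<noteq> a" using Suc_skip_at_eq_iff by auto
    thus ?thesis using x by (auto simp: LR_starts_def)
  qed
next
  fix i assume i: "i \<in> ?R"
  show "i \<in> ?L"
  proof (cases "i \<in> skip_at a ` {x \<in> LR_starts D. Suc x \<noteq> a}")
    case True
    then obtain x where x: "i = skip_at a x" "x \<in> LR_starts D" "Suc x \<noteq> a" by auto
    hence "Suc (skip_at a x) = skip_at a (Suc x)" using Suc_skip_at_eq_iff by blast
    thus ?thesis using x
      by (auto simp: LR_starts_def is_startpoint_insert_chord[OF cd a(2)] is_endpoint_insert_chord[OF cd a(2)])
  next
    case False
    hence "i = a" "a = 2*n+1 \<or> is_endpoint D a" using i by (auto split: if_splits)
    moreover have "Suc a = skip_at a a" by (simp add: skip_at_def)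
    ultimately show ?thesis
      by (auto simp: LR_starts_def is_startpoint_insert_chord[OF cd a(2)] is_endpoint_insert_chord[OF cd a(2)])
  qed
qed

lemma LR_pairs_insert_chord:
  assumes cd: "chord_diagram n D" and a: "1 \<le> a" "a \<le> 2*n+1"
  shows "LR_pairs (insert_chord n a D) = LR_pairs D +
    (if a \<in> Suc ` LR_starts D \<or> \<not> (a = 2*n+1 \<or> is_endpoint D a) then 0 else 1)"
proof -
  let ?S = "{x \<in> LR_starts D. Suc x \<noteq> a}"
  have fin: "finite ?S" using finite_LR_starts[OF cd] by simp
  have "a \<notin> skip_at a ` ?S" using skip_at_neq by (metis imageE)
  hence "LR_pairs (insert_chord n a D)
      = card (skip_at a ` ?S) + (if a = 2*n+1 \<or> is_endpoint D a then 1 else 0)"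
    using fin by (simp add: LR_pairs_eq_card_LR_starts LR_starts_insert_chord[OF assms] card_Un_disjoint)
  also have "card (skip_at a ` ?S) = card ?S"
    using card_image[OF inj_on_subset[OF inj_skip_at]] by blast
  finally have "LR_pairs (insert_chord n a D)
      = card ?S + (if a = 2*n+1 \<or> is_endpoint D a then 1 else 0)" .
  moreover have "card ?S = card (LR_starts D) - (if a \<in> Suc ` LR_starts D then 1 else 0)"
  proof (cases "a \<in> Suc ` LR_starts D")
    case True
    then obtain x where "x \<in> LR_starts D" "a = Suc x" by blast
    moreover hence "?S = LR_starts D - {x}" by auto
    ultimately show ?thesis using finite_LR_starts[OF cd] True by simp
  qed (auto intro: arg_cong[where f = card])
  moreover have "a \<in> Suc ` LR_starts D \<Longrightarrow> is_endpoint D a \<and> card (LR_starts D) \<ge> 1"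
    using finite_LR_starts[OF cd] by (auto simp: LR_starts_def Suc_le_eq card_gt_0_iff)
  ultimately show ?thesis by (auto simp: LR_pairs_eq_card_LR_starts)
qed

lemma card_LR_stable_slots:
  assumes cd: "chord_diagram n D"
  shows "card {a \<in> {1..2*n+1}. a \<in> Suc ` LR_starts D \<or> \<not> (a = 2*n+1 \<or> is_endpoint D a)}
    = n + LR_pairs D"
proof -
  let ?S = "{x. is_startpoint D x}"
  have finS: "finite ?S" by (rule finite_subset[of _ "{..2*n}"]) (auto dest: startpoint_range[OF cd])
  have "{a \<in> {1..2*n+1}. a \<in> Suc ` LR_starts D \<or> \<not> (a = 2*n+1 \<or> is_endpoint D a)}
     = ?S \<union> Suc ` LR_starts D"
    (is "?A = _")
  proof (intro set_eqI iffI)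
    fix a assume a: "a \<in> ?A"
    show "a \<in> ?S \<union> Suc ` LR_starts D"
    proof (cases "a \<in> Suc ` LR_starts D")
      case False
      hence "a \<noteq> 2*n+1" "\<not> is_endpoint D a" using a by auto
      thus ?thesis using startpoint_or_endpoint[OF cd, of a] a by auto
    qed simp
  next
    fix a assume "a \<in> ?S \<union> Suc ` LR_starts D"
    thus "a \<in> ?A"
    proof
      assume "a \<in> ?S"
      thus "a \<in> ?A" using startpoint_range[OF cd, of a] not_startpoint_and_endpoint[OF cd, of a] by auto
    next
      assume "a \<in> Suc ` LR_starts D"
      moreover then obtain x where "a = Suc x" "is_endpoint D (Suc x)" by (auto simp: LR_starts_def)
      ultimately show "a \<in> ?A" using endpoint_range[OF cd, of "Suc x"] by auto
    qed
  qed
  moreover have "?S \<inter> Suc ` LR_starts D = {}"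
    using not_startpoint_and_endpoint[OF cd] by (auto simp: LR_starts_def)
  ultimately show ?thesis
    using finS finite_LR_starts[OF cd] card_startpoints[OF cd]
    by (simp add: card_Un_disjoint card_image LR_pairs_eq_card_LR_starts)
qed

lemma last_point_notin_shifted_chord:
  assumes "chord_diagram n D" "c \<in> (`) (skip_at a) ` D"
  shows "2*n+2 \<notin> c"
proof
  assume "2*n+2 \<in> c"
  then obtain c' z where c': "c' \<in> D" "z \<in> c'" "2*n+2 = skip_at a z" using assms(2) by blast
  have "\<Union>D = {1..2*n}" using assms(1) by (simp add: chord_diagram_def partition_on_def)
  hence "z \<le> 2*n" using c' by auto
  thus False using c'(3) skip_at_le[of a z] by simp
qed

lemma chord_diagram_insert_chord:
  assumes cd: "chord_diagram n D" and a: "1 \<le> a" "a \<le> 2*n+1"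
  shows "chord_diagram (Suc n) (insert_chord n a D)"
proof -
  have pD: "partition_on {1..2*n} D" and c2: "\<forall>c\<in>D. card c = 2"
    using cd by (auto simp: chord_diagram_def)
  have inj: "inj_on (skip_at a) A" for A
    by (rule inj_on_subset[OF inj_skip_at]) simp
  have "(`) (skip_at a) ` D - {{}} = (`) (skip_at a) ` D"
    using chord_diagram_chord_finite[OF cd] by auto
  hence shifted: "partition_on ({1..2*n+2} - {a, 2*n+2}) ((`) (skip_at a) ` D)"
    using partition_on_inj_image[OF pD inj] skip_at_image[OF a] by simp
  hence "\<Union>((`) (skip_at a) ` D) = {1..2*n+2} - {a, 2*n+2}"
    by (simp add: partition_on_def)
  hence "disjnt {a, 2*n+2} (\<Union>((`) (skip_at a) ` D))"
    by (simp add: disjnt_def)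
  moreover have "{a, 2*n+2} \<subseteq> {1..2*n+2}" using a by auto
  ultimately have "partition_on {1..2*n+2} (insert {a, 2*n+2} ((`) (skip_at a) ` D))"
    using shifted by (simp add: partition_on_insert)
  moreover have "\<forall>c\<in>insert {a, 2*n+2} ((`) (skip_at a) ` D). card c = 2"
    using a c2 by (simp add: card_image[OF inj])
  ultimately show ?thesis by (simp add: chord_diagram_def insert_chord_def)
qed

text \<open>Removing the chord through the last point 2n+2 and closing the gap at its startpoint a
  inverts the insertion.\<close>

lemma chord_diagram_Suc_obtain_insert_chord:
  assumes cd: "chord_diagram (Suc n) C"
  obtains a D where "1 \<le> a" "a \<le> 2*n+1" "chord_diagram n D" "C = insert_chord n a D"
proof -
  have pC: "partition_on {1..2*n+2} C" and c2: "\<forall>c\<in>C. card c = 2"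
    using cd by (auto simp: chord_diagram_def)
  obtain c0 where c0: "c0 \<in> C" "2*n+2 \<in> c0" using chord_diagram_cover[OF cd, of "2*n+2"] by auto
  obtain a y where "a < y" "c0 = {a, y}" "a \<in> {1..2 * Suc n}" "y \<in> {1..2 * Suc n}"
    using chord_diagram_chordE[OF cd c0(1)] by blast
  hence a: "1 \<le> a" "a \<le> 2*n+1" and c0a: "c0 = {a, 2*n+2}" using c0(2) by auto
  let ?C' = "C - {c0}"
  have "disjnt c0 (\<Union>?C')" unfolding disjnt_def using chord_diagram_chord_unique[OF cd] c0(1) by blast
  moreover have "C = insert c0 ?C'" using c0(1) by blast
  ultimately have pC': "partition_on ({1..2*n+2} - {a, 2*n+2}) ?C'"
    using pC c0a by (metis partition_on_insert)
  have not_a: "c \<in> ?C' \<Longrightarrow> a \<notin> c" for c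
    using chord_diagram_chord_unique[OF cd, of c c0 a] c0 c0a by auto
  define D where "D = (`) (unskip_at a) ` ?C'"
  have inj_c: "c \<in> ?C' \<Longrightarrow> inj_on (unskip_at a) c" for c
    using not_a by (intro inj_on_subset[OF inj_on_unskip_at]) auto
  have cardD: "\<forall>c\<in>D. card c = 2" using c2 inj_c by (auto simp: D_def card_image)
  hence "D - {{}} = D" by fastforce
  moreover have "inj_on (unskip_at a) ({1..2*n+2} - {a, 2*n+2})"
    by (rule inj_on_subset[OF inj_on_unskip_at]) auto
  ultimately have "partition_on {1..2*n} D"
    using partition_on_inj_image[OF pC'] unskip_at_image[OF a] unfolding D_def by metis
  hence "chord_diagram n D" using cardD by (simp add: chord_diagram_def)
  moreover have "(`) (skip_at a) ` D = ?C'"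
  proof -
    have "skip_at a ` unskip_at a ` c = c" if "c \<in> ?C'" for c
    proof -
      have "skip_at a ` unskip_at a ` c = (\<lambda>z. z) ` c"
        unfolding image_image using not_a[OF that] by (intro image_cong refl) (metis skip_unskip_at)
      thus ?thesis by simp
    qed
    thus ?thesis unfolding D_def by (simp add: image_image)
  qed
  hence "C = insert_chord n a D" unfolding insert_chord_def using c0 c0a by auto
  ultimately show ?thesis using that a by blast
qed

lemma insert_chord_inj:
  assumes cd: "chord_diagram n D" "chord_diagram n D'" and a: "a \<le> 2*n+1" "a' \<le> 2*n+1"
    and eq: "insert_chord n a D = insert_chord n a' D'"
  shows "a = a' \<and> D = D'"
proof -
  have "{a, 2*n+2} \<in> insert_chord n a' D'" using eq unfolding insert_chord_def by auto
  moreover have "{a, 2*n+2} \<notin> (`) (skip_at a') ` D'"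
    using last_point_notin_shifted_chord[OF cd(2), of "{a, 2*n+2}" a'] by blast
  ultimately have "{a, 2*n+2} = {a', 2*n+2}" by (simp add: insert_chord_def)
  hence aa: "a = a'" using a by (auto simp: doubleton_eq_iff)
  have "insert_chord n a X - {{a, 2*n+2}} = (`) (skip_at a) ` X" if "chord_diagram n X" for X
  proof -
    have "{a, 2*n+2} \<notin> (`) (skip_at a) ` X"
      using last_point_notin_shifted_chord[OF that, of "{a, 2*n+2}" a] by blast
    thus ?thesis by (simp add: insert_chord_def)
  qed
  hence "(`) (skip_at a) ` D = (`) (skip_at a) ` D'" using cd eq aa by metis
  moreover have "inj ((`) (skip_at a))" by (simp add: inj_image_eq_iff[OF inj_skip_at] inj_def)
  ultimately show ?thesis using aa by (simp add: inj_image_eq_iff)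
qed

definition chord_count :: "nat \<Rightarrow> nat \<Rightarrow> nat" where
  "chord_count n k = card {C. chord_diagram n C \<and> LR_pairs C = k}"

theorem chord_count_Suc:
  "chord_count (Suc n) k = (n + k) * chord_count n k + (if k = 0 then 0 else (n + 2 - k) * chord_count n (k - 1))"
proof -
  let ?X = "{D. chord_diagram n D}" and ?Q = "{1..2*n+1}"
  let ?Z = "\<lambda>D a. a \<in> Suc ` LR_starts D \<or> \<not> (a = 2*n+1 \<or> is_endpoint D a)"
  let ?g = "\<lambda>(D, a). insert_chord n a D"
  have "inj_on ?g (?X \<times> ?Q)"
  proof (rule inj_onI, clarify)
    fix D a D' a' assume "chord_diagram n D" "chord_diagram n D'" "a \<in> ?Q" "a' \<in> ?Q"
      and "insert_chord n a D = insert_chord n a' D'"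
    thus "D = D' \<and> a = a'" using insert_chord_inj[of n D D' a a'] by auto
  qed
  moreover have "?g ` (?X \<times> ?Q) = {C. chord_diagram (Suc n) C}"
  proof
    show "?g ` (?X \<times> ?Q) \<subseteq> {C. chord_diagram (Suc n) C}"
      using chord_diagram_insert_chord by auto
    show "{C. chord_diagram (Suc n) C} \<subseteq> ?g ` (?X \<times> ?Q)"
      by (force elim: chord_diagram_Suc_obtain_insert_chord)
  qed
  moreover have "LR_pairs (?g (D, a)) = LR_pairs D + (if ?Z D a then 0 else 1)"
    if "D \<in> ?X" "a \<in> ?Q" for D a
    using LR_pairs_insert_chord[of n D a] that by simp
  moreover have "card {a \<in> ?Q. ?Z D a} = n + LR_pairs D" if "D \<in> ?X" for D
    using card_LR_stable_slots that by simp
  ultimately have "card {C \<in> {C. chord_diagram (Suc n) C}. LR_pairs C = k}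
      = (n + k) * card {D \<in> ?X. LR_pairs D = k}
        + (if k = 0 then 0 else (card ?Q - (n + (k - 1))) * card {D \<in> ?X. LR_pairs D = k - 1})"
    by (intro card_level_set_by_insertion[where Z = ?Z and f = "\<lambda>j. n + j"])
       (auto simp: bij_betw_def finite_chord_diagram)
  moreover have "k \<noteq> 0 \<Longrightarrow> card ?Q - (n + (k - 1)) = n + 2 - k" by simp
  ultimately show ?thesis unfolding chord_count_def by auto
qed

section \<open>The triangle T\<close>

lemma eulerian2_0: "eulerian2 0 k = (if k = 0 then 1 else 0)"
proof -
  have "{w. stirling_perm 0 w \<and> ascents w = k} = (if k = 0 then {[]} else {})"
    by (auto simp: stirling_perm_def ascents_def)
  thus ?thesis unfolding eulerian2_def by simp
qed

lemma eulerian2_eq_0: "0 < k \<Longrightarrow> n \<le> k \<Longrightarrow> eulerian2 n k = 0"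
proof (induction n arbitrary: k)
  case 0 thus ?case by (simp add: eulerian2_0)
next
  case (Suc n)
  have "eulerian2 n k = 0" using Suc by simp
  moreover have "(2 * n + 1 - k) * eulerian2 n (k - 1) = 0"
  proof (cases "k = 1")
    case False thus ?thesis using Suc.IH[of "k - 1"] Suc.prems by simp
  qed (use Suc.prems in simp)
  ultimately show ?case by (simp add: eulerian2_Suc)
qed

lemma eulerian2_Suc_self: "eulerian2 (Suc n) n = fact (Suc n)"
proof (induction n)
  case 0 thus ?case by (simp add: eulerian2_Suc eulerian2_0)
next
  case (Suc n)
  have "eulerian2 (Suc (Suc n)) (Suc n) = (n + 2) * eulerian2 (Suc n) (Suc n) + (n + 2) * eulerian2 (Suc n) n"
    by (simp add: eulerian2_Suc)
  also have "eulerian2 (Suc n) (Suc n) = 0" by (rule eulerian2_eq_0) auto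
  finally show ?case using Suc by simp
qed

text \<open>Unlike T, this reversal also covers k = 0 (with the value 1 at n = 0), which makes its
  recurrence hold for all n and k.\<close>

definition eulerian2_rev :: "nat \<Rightarrow> nat \<Rightarrow> nat" where
  "eulerian2_rev n k = (if k \<le> n then eulerian2 n (n - k) else 0)"

lemma eulerian2_rev_Suc:
  "eulerian2_rev (Suc n) k
     = (n + k) * eulerian2_rev n k + (if k = 0 then 0 else (n + 2 - k) * eulerian2_rev n (k - 1))"
proof (cases "k = 0 \<or> n + 1 < k")
  case True
  have "n * eulerian2 n n = 0" using eulerian2_eq_0[of n n] by (cases n) auto
  thus ?thesis using True by (auto simp: eulerian2_rev_def eulerian2_eq_0)
next
  case False
  hence "eulerian2 (Suc n) (n + 1 - k) = (n + 2 - k) * eulerian2 n (n - (k - 1))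
      + (if k \<le> n then (n + k) * eulerian2 n (n - k) else 0)"
    by (auto simp: eulerian2_Suc Suc_diff_le)
  moreover have "k - 1 \<le> n" using False by arith
  ultimately show ?thesis using False by (simp add: eulerian2_rev_def)
qed

lemma chord_count_0: "chord_count 0 k = (if k = 0 then 1 else 0)"
proof -
  have "chord_diagram 0 C \<longleftrightarrow> C = {}" for C
    by (auto simp: chord_diagram_def partition_on_empty)
  moreover have "LR_pairs {} = 0" by (simp add: LR_pairs_def is_startpoint_def)
  ultimately have "{C. chord_diagram 0 C \<and> LR_pairs C = k} = (if k = 0 then {{}} else {})"
    by auto
  thus ?thesis unfolding chord_count_def by simp
qed

lemma chord_count_eq_eulerian2_rev: "chord_count n k = eulerian2_rev n k"
proof (induction n arbitrary: k)
  case 0 thus ?case by (simp add: chord_count_0 eulerian2_rev_def eulerian2_0)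
next
  case (Suc n) thus ?case by (simp add: chord_count_Suc eulerian2_rev_Suc)
qed

lemma T_eq_eulerian2_rev: "1 \<le> n \<Longrightarrow> T n k = eulerian2_rev n k"
  using eulerian2_eq_0[of n n] by (cases k) (auto simp: T_def eulerian2_rev_def)

theorem mainTheorem4:
  fixes n k :: nat
  assumes "1 \<le> n" and "1 \<le> k" and "k \<le> n"
  shows "(2 \<le> n \<longrightarrow> T n k = (n - k + 1) * T (n - 1) (k - 1) + (n - 1 + k) * T (n - 1) k)
         \<and> T n 1 = fact n
         \<and> T n k = card {C. chord_diagram n C \<and> LR_pairs C = k}"
proof (intro conjI impI)
  obtain m where n: "n = Suc m" using assms by (cases n) auto
  show "2 \<le> n \<Longrightarrow> T n k = (n - k + 1) * T (n - 1) (k - 1) + (n - 1 + k) * T (n - 1) k"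
  proof -
    assume "2 \<le> n"
    hence "T n k = (m + k) * T m k + (m + 2 - k) * T m (k - 1)"
      using eulerian2_rev_Suc[of m k] T_eq_eulerian2_rev assms n by simp
    thus ?thesis using assms n by (simp add: Suc_diff_le)
  qed
  show "T n 1 = fact n" unfolding n T_def using eulerian2_Suc_self by simp
  show "T n k = card {C. chord_diagram n C \<and> LR_pairs C = k}"
    using T_eq_eulerian2_rev chord_count_eq_eulerian2_rev assms unfolding chord_count_def by simp
qed

end
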